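(* For every integer $d \ge 0$, \[ \lambda_\infty^d \;=\; \frac{1}{d!}\cdot\begin{cases} T_d, & d \text{ odd},\\ E_d, & d \text{ even},\end{cases} \] where $\lambda_\infty^d := t_0^d + 2\sum_{j=1}^{r}(-1)^j t_j^d$ with $r=\lfloor d/2\rfloor$ and $t_j^d := N^d\!\left(j+\frac{d+1}{2}\right)$.
   Context: Truncated powers: for $d>0$, $(x-i)_+^d = (x-i)^d$ if $x\ge i$ and $0$ otherwise; $(x-i)_+^0 = 1$ if $x \ge i$ and $0$ if $x<i$. The normalized cardinal B-spline of degree $d$ (with simple knots $0,1,\dots,d+1$) is $N^d(x) = \frac{1}{d!}\sum_{i=0}^{d+1}(-1)^i\binom{d+1}{i}(x-i)_+^d$. The tangent numbers $T_n$ and Euler numbers $E_n$ are defined by $\tan t = \sum_{n\ge 0} T_n \frac{t^n}{n!}$ and $\sec t = \sum_{n\ge0} E_n\frac{t^n}{n!}$. *)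

theory Defs
  imports "HOL-Analysis.Analysis" "HOL-Computational_Algebra.Formal_Power_Series"
begin

(* truncated power (x)_+^d ; for d = 0 this is 1 if x >= 0 and 0 otherwise (0^0 = 1) *)
definition tpow :: "nat \<Rightarrow> real \<Rightarrow> real" where
  "tpow d x = (if x \<ge> 0 then x ^ d else 0)"

definition bspline :: "nat \<Rightarrow> real \<Rightarrow> real" where
  "bspline d x = (1 / fact d) *
     (\<Sum>i=0..d+1. (-1) ^ i * real ((d+1) choose i) * tpow d (x - real i))"

definition tangent_number :: "nat \<Rightarrow> real" where
  "tangent_number n = fact n * fps_nth (fps_tan (1::real)) n"

definition euler_number :: "nat \<Rightarrow> real" where
  "euler_number n = fact n * fps_nth (inverse (fps_cos (1::real))) n"

definition tval :: "nat \<Rightarrow> nat \<Rightarrow> real" where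
  "tval d j = bspline d (real j + (real d + 1) / 2)"

definition lambda_inf :: "nat \<Rightarrow> real" where
  "lambda_inf d = tval d 0 + 2 * (\<Sum>j=1..d div 2. (-1) ^ j * tval d j)"

end

theory Submission
  imports Defs
begin

(*
  Write P_d for the polynomial
      P_d(x) = sum_{j<=d} (-1)^j sum_{i<=j} (-1)^i C(d+1,i) (x+j-i)^d,
  which on [0,1) equals d! * sum_{j<=d} (-1)^j N^d(x+j), because the truncated powers
  with i > j vanish there.  Telescoping, together with the vanishing of (d+1)-st finite
  differences of polynomials of degree d, gives the functional equation
      P_d(x) + P_d(x+1) = 2^(d+1) x^d,
  so P_d = 2^d E_d(x) with E_d the Euler polynomial.  A polynomial with p(x)+p(x+1) = 0
  vanishes, which yields the Appell property P_n(x+h) = sum_j C(n,j) (2h)^j P_(n-j)(x) and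
  hence sum_j C(n,j) (1+(-1)^j) P_(n-j)(x) = 2^(n+1) (x-1/2)^n.
  On the spline side, the symmetry N^d(d+1-y) = N^d(y) folds the alternating sum of
  B-spline values, giving  d! lambda^d = (-1)^r P_d(1/2)  for d = 2r and
  d! lambda^d = (-1)^(r+1) P_d(0)  for d = 2r+1.  Reading the binomial identity at x = 1/2
  and x = 0 coefficientwise shows cos t * (even part of sum lambda^d t^d) = 1 and
  cos t * (odd part) = sin t, i.e. the two parts are sec t and tan t.
*)

(* Pascal's rule turns an alternating binomial sum of order n+1 into one of order n
   applied to the forward differences of f. *)
lemma alternating_binomial_sum_Suc:
  fixes f :: "nat \<Rightarrow> 'a::comm_ring_1"
  shows "(\<Sum>i\<le>Suc n. (-1)^i * of_nat (Suc n choose i) * f i) =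
         (\<Sum>i\<le>n. (-1)^i * of_nat (n choose i) * (f i - f (Suc i)))"
proof -
  have lower: "(\<Sum>i\<le>n. (-1)^Suc i * of_nat (n choose Suc i) * f (Suc i))
      = (\<Sum>i\<le>Suc n. (-1)^i * of_nat (n choose i) * f i) - f 0"
    unfolding sum.atMost_Suc_shift by (simp del: sum.atMost_Suc)
  have "(\<Sum>i\<le>Suc n. (-1)^i * of_nat (Suc n choose i) * f i)
      = f 0 + (\<Sum>i\<le>n. (-1)^Suc i * of_nat (Suc n choose Suc i) * f (Suc i))"
    by (simp only: sum.atMost_Suc_shift) simp
  also have "\<dots> = f 0 + (\<Sum>i\<le>n. (-1)^Suc i * of_nat (n choose Suc i) * f (Suc i))
                        - (\<Sum>i\<le>n. (-1)^i * of_nat (n choose i) * f (Suc i))"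
    by (simp add: ring_distribs sum_subtractf sum_negf)
  also have "\<dots> = (\<Sum>i\<le>n. (-1)^i * of_nat (n choose i) * f i)
                   - (\<Sum>i\<le>n. (-1)^i * of_nat (n choose i) * f (Suc i))"
    unfolding lower by (simp add: binomial_eq_0)
  also have "\<dots> = (\<Sum>i\<le>n. (-1)^i * of_nat (n choose i) * (f i - f (Suc i)))"
    by (simp add: sum_subtractf right_diff_distrib)
  finally show ?thesis .
qed

lemma finite_difference_power:
  fixes y :: "'a::comm_ring_1"
  assumes "k < n"
  shows "(\<Sum>i\<le>n. (-1)^i * of_nat (n choose i) * (y - of_nat i)^k) = 0"
  using assms
proof (induction n arbitrary: k y)
  case 0
  then show ?case by simp
next
  case (Suc n)
  show ?case
  proof (cases k)
    case 0
    then show ?thesis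
      using choose_alternating_sum[of "Suc n", where 'a='a] by (simp del: sum.atMost_Suc)
  next
    case (Suc m)
    have step: "(y - of_nat i)^k - (y - of_nat (Suc i))^k
        = (\<Sum>l\<le>m. of_nat (Suc m choose l) * (y - 1 - of_nat i)^l)" for i
    proof -
      have "(y - of_nat i)^k = ((y - 1 - of_nat i) + 1)^Suc m" using Suc by simp
      also have "\<dots> = (\<Sum>l\<le>Suc m. of_nat (Suc m choose l) * (y - 1 - of_nat i)^l)"
        by (subst binomial_ring) (simp add: atLeast0AtMost mult_ac)
      finally show ?thesis using Suc by (simp add: algebra_simps)
    qed
    have "(\<Sum>i\<le>Suc n. (-1)^i * of_nat (Suc n choose i) * (y - of_nat i)^k)
        = (\<Sum>l\<le>m. of_nat (Suc m choose l) *
             (\<Sum>i\<le>n. (-1)^i * of_nat (n choose i) * (y - 1 - of_nat i)^l))"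
      unfolding alternating_binomial_sum_Suc step
      by (simp add: sum_distrib_left sum_distrib_right mult_ac sum.swap[of _ "{..m}"])
    also have "\<dots> = 0"
      using Suc.IH[of _ "y - 1"] Suc.prems \<open>k = Suc m\<close> by (intro sum.neutral) auto
    finally show ?thesis .
  qed
qed

(* The polynomial P_d; it equals 2^d times the Euler polynomial E_d. *)
definition scaled_euler_poly :: "nat \<Rightarrow> real poly" where
  "scaled_euler_poly d =
     (\<Sum>j\<le>d. \<Sum>i\<le>j. smult ((-1)^j * (-1)^i * of_nat (Suc d choose i)) ([:real j - real i, 1:] ^ d))"

lemma poly_scaled_euler_poly:
  "poly (scaled_euler_poly d) x =
     (\<Sum>j\<le>d. (-1)^j * (\<Sum>i\<le>j. (-1)^i * real (Suc d choose i) * (x + real j - real i)^d))"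
  by (simp add: scaled_euler_poly_def poly_sum sum_distrib_left algebra_simps)

(* The functional equation of P_d: the sum over j telescopes after the shift x -> x+1,
   and the remaining boundary term is a (d+1)-st difference of a degree d polynomial. *)
lemma scaled_euler_poly_functional_equation:
  "poly (scaled_euler_poly d) x + poly (scaled_euler_poly d) (x + 1) = 2^Suc d * x^d"
proof -
  define S where "S j = (\<Sum>i\<le>j. (-1)^i * real (Suc d choose i) * (x + real j - real i)^d)" for j
  have at_x: "poly (scaled_euler_poly d) x = (\<Sum>j\<le>d. (-1)^j * S j)"
    by (simp add: poly_scaled_euler_poly S_def)
  have S_shift: "(\<Sum>i\<le>j. (-1)^i * real (Suc d choose i) * (x + 1 + real j - real i)^d)
      = S (Suc j) - (-1)^Suc j * real (Suc d choose Suc j) * x^d" for j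
    by (simp add: S_def add_ac)
  have row_sum: "(\<Sum>j\<le>d. real (Suc d choose Suc j)) = 2^Suc d - 1"
  proof -
    have "(\<Sum>j\<le>Suc d. real (Suc d choose j)) = 2^Suc d"
      using choose_row_sum[of "Suc d"] by (metis of_nat_numeral of_nat_power of_nat_sum)
    then show ?thesis unfolding sum.atMost_Suc_shift by (simp del: sum.atMost_Suc)
  qed
  have at_x1: "poly (scaled_euler_poly d) (x + 1)
      = (\<Sum>j\<le>d. (-1)^j * S (Suc j)) + (2^Suc d - 1) * x^d"
    unfolding poly_scaled_euler_poly S_shift row_sum[symmetric]
    by (simp add: algebra_simps sum_subtractf sum_distrib_right sum_distrib_left sum.distrib)
  have telescope: "(\<Sum>j\<le>d. (-1)^j * S j) + (\<Sum>j\<le>d. (-1)^j * S (Suc j))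
      = S 0 - (-1)^Suc d * S (Suc d)"
    using sum_telescope[of "\<lambda>j. (-1)^j * S j" d] by (simp add: sum.distrib)
  have "S (Suc d) = (\<Sum>i\<le>Suc d. (-1)^i * real (Suc d choose i) * ((x + real (Suc d)) - real i)^d)"
    by (simp add: S_def)
  also have "\<dots> = 0"
    by (rule finite_difference_power) simp
  finally have "S (Suc d) = 0" .
  moreover have "S 0 = x^d" by (simp add: S_def)
  ultimately show ?thesis
    using at_x at_x1 telescope by (simp add: algebra_simps)
qed

(* A polynomial with p(x) + p(x+1) = 0 is 2-periodic, hence constant, hence zero. *)
lemma poly_antiperiodic_eq_0:
  fixes p :: "'a::{idom,ring_char_0} poly"
  assumes antiperiodic: "\<And>x. poly p x + poly p (x + 1) = 0"
  shows "p = 0"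
proof -
  have periodic: "poly p (x + 2) = poly p x" for x
    using antiperiodic[of x] antiperiodic[of "x + 1"]
    by (simp add: add.assoc) (metis add.commute add_right_cancel)
  have on_evens: "poly p (2 * of_nat n) = poly p 0" for n
  proof (induction n)
    case (Suc n)
    have "2 * of_nat (Suc n) = 2 * of_nat n + (2::'a)" by (simp add: algebra_simps)
    then show ?case using periodic[of "2 * of_nat n"] Suc.IH by (simp only:)
  qed simp
  define q where "q = p - [:poly p 0:]"
  have "q = 0"
  proof (rule ccontr)
    assume "q \<noteq> 0"
    then have "finite {x. poly q x = 0}" by (rule poly_roots_finite)
    moreover have "range (\<lambda>n::nat. 2 * of_nat n :: 'a) \<subseteq> {x. poly q x = 0}"
      using on_evens by (auto simp: q_def)
    moreover have "infinite (range (\<lambda>n::nat. 2 * of_nat n :: 'a))"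
      by (rule range_inj_infinite) (simp add: inj_on_def)
    ultimately show False using finite_subset by blast
  qed
  have const: "poly p x = poly p 0" for x
  proof -
    have "poly q x = 0" using \<open>q = 0\<close> by simp
    then show ?thesis by (simp add: q_def)
  qed
  have "poly p 0 = 0"
    using antiperiodic[of 0] const[of 1] by simp
  then have "q = p" by (simp add: q_def)
  with \<open>q = 0\<close> show ?thesis by simp
qed

(* Appell property: both sides satisfy the functional equation in x with the same
   right-hand side, so their difference is an antiperiodic polynomial. *)
lemma scaled_euler_poly_shift:
  "poly (scaled_euler_poly n) (x + h) =
     (\<Sum>j\<le>n. real (n choose j) * (2*h)^j * poly (scaled_euler_poly (n - j)) x)"
proof -
  define R where "R = pcompose (scaled_euler_poly n) [:h, 1:] -
    (\<Sum>j\<le>n. smult (real (n choose j) * (2*h)^j) (scaled_euler_poly (n - j)))"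
  have poly_R: "poly R y = poly (scaled_euler_poly n) (y + h) -
      (\<Sum>j\<le>n. real (n choose j) * (2*h)^j * poly (scaled_euler_poly (n - j)) y)" for y
    by (simp add: R_def poly_pcompose poly_sum add.commute)
  have "poly R y + poly R (y + 1) = 0" for y
  proof -
    have lhs: "poly (scaled_euler_poly n) (y + h) + poly (scaled_euler_poly n) (y + 1 + h)
        = 2^Suc n * (y + h)^n"
      using scaled_euler_poly_functional_equation[of n "y + h"] by (simp add: add_ac)
    have "(\<Sum>j\<le>n. real (n choose j) * (2*h)^j * poly (scaled_euler_poly (n - j)) y) +
          (\<Sum>j\<le>n. real (n choose j) * (2*h)^j * poly (scaled_euler_poly (n - j)) (y + 1))
        = (\<Sum>j\<le>n. real (n choose j) * (2*h)^j * (2^Suc (n - j) * y^(n - j)))"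
      unfolding sum.distrib[symmetric]
      by (simp only: distrib_left[symmetric] scaled_euler_poly_functional_equation)
    also have "\<dots> = 2^Suc n * (\<Sum>j\<le>n. real (n choose j) * h^j * y^(n - j))"
      unfolding sum_distrib_left
    proof (rule sum.cong[OF refl])
      fix j assume "j \<in> {..n}"
      then have "(2::real)^j * 2^Suc (n - j) = 2^Suc n" by (simp flip: power_add)
      then show "real (n choose j) * (2*h)^j * (2^Suc (n - j) * y^(n - j))
          = 2^Suc n * (real (n choose j) * h^j * y^(n - j))"
        by (simp add: algebra_simps)
    qed
    also have "\<dots> = 2^Suc n * (y + h)^n"
      by (subst add.commute) (simp add: binomial_ring atLeast0AtMost mult_ac)
    finally show ?thesis
      using lhs unfolding poly_R by (simp add: algebra_simps)
  qed
  then have "R = 0" by (rule poly_antiperiodic_eq_0)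
  then show ?thesis using poly_R[of x] by simp
qed

(* Adding the shifts by 1/2 and -1/2 leaves only the terms with even j. *)
lemma scaled_euler_poly_parity_sum:
  "(\<Sum>j\<le>n. real (n choose j) * (1 + (-1)^j) * poly (scaled_euler_poly (n - j)) x)
     = 2^Suc n * (x - 1/2)^n"
proof -
  have plus: "poly (scaled_euler_poly n) (x + 1/2) =
      (\<Sum>j\<le>n. real (n choose j) * poly (scaled_euler_poly (n - j)) x)"
    using scaled_euler_poly_shift[of n x "1/2"] by simp
  have minus: "poly (scaled_euler_poly n) (x - 1/2) =
      (\<Sum>j\<le>n. real (n choose j) * (-1)^j * poly (scaled_euler_poly (n - j)) x)"
    using scaled_euler_poly_shift[of n x "-1/2"] by simp
  have "poly (scaled_euler_poly n) (x - 1/2) + poly (scaled_euler_poly n) (x + 1/2)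
      = 2^Suc n * (x - 1/2)^n"
    using scaled_euler_poly_functional_equation[of n "x - 1/2"] by (simp add: add.commute)
  then show ?thesis
    unfolding plus minus by (simp add: algebra_simps sum.distrib)
qed

lemma bspline_eq_sum:
  "fact d * bspline d y = (\<Sum>i\<le>Suc d. (-1)^i * real (Suc d choose i) * tpow d (y - real i))"
  by (simp add: bspline_def atLeast0AtMost)

lemma bspline_at_zero:
  assumes "1 \<le> d"
  shows "bspline d 0 = 0"
proof -
  have "tpow d (0 - real i) = 0" for i
    using assms by (cases "i = 0") (auto simp: tpow_def)
  then show ?thesis by (simp add: bspline_def)
qed

(* On [0,1) only the truncated powers with i <= j survive, which is exactly P_d. *)
lemma scaled_euler_poly_eq_bspline_sum:
  assumes "0 \<le> x" "x < 1"
  shows "poly (scaled_euler_poly d) x = (\<Sum>j\<le>d. (-1)^j * (fact d * bspline d (x + real j)))"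
  unfolding poly_scaled_euler_poly
proof (rule sum.cong[OF refl])
  fix j assume j: "j \<in> {..d}"
  have "(\<Sum>i\<le>Suc d. (-1)^i * real (Suc d choose i) * tpow d (x + real j - real i))
      = (\<Sum>i\<le>j. (-1)^i * real (Suc d choose i) * (x + real j - real i)^d)"
  proof (rule sum.mono_neutral_cong_right)
    show "\<forall>i\<in>{..Suc d} - {..j}. (-1)^i * real (Suc d choose i) * tpow d (x + real j - real i) = 0"
      using assms by (auto simp: tpow_def)
    show "(-1)^i * real (Suc d choose i) * tpow d (x + real j - real i)
        = (-1)^i * real (Suc d choose i) * (x + real j - real i)^d" if "i \<in> {..j}" for i
      using that assms by (auto simp: tpow_def)
  qed (use j in auto)
  then show "(-1)^j * (\<Sum>i\<le>j. (-1)^i * real (Suc d choose i) * (x + real j - real i)^d)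
      = (-1)^j * (fact d * bspline d (x + real j))"
    by (simp add: bspline_eq_sum)
qed

lemma minus_one_power_diff:
  assumes "i \<le> n"
  shows "(-1::'a::comm_ring_1)^(n - i) = (-1)^n * (-1)^i"
proof -
  obtain k where n: "n = i + k" using assms le_Suc_ex by blast
  then show ?thesis by (simp add: power_add mult_ac)
qed

lemma tpow_reflect:
  assumes "1 \<le> d"
  shows "tpow d (-u) = (-1)^d * (u^d - tpow d u)"
proof -
  consider "u > 0" | "u = 0" | "u < 0" by linarith
  then show ?thesis
  proof cases
    case 3
    then show ?thesis using power_minus[of u d] by (simp add: tpow_def)
  qed (use assms in \<open>simp_all add: tpow_def\<close>)
qed

(* Symmetry of the cardinal B-spline about the centre (d+1)/2 of its support;
   reflecting the knots produces the extra terms u^d, whose alternating sum vanishes. *)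
lemma bspline_symmetric:
  assumes "1 \<le> d"
  shows "bspline d (real (Suc d) - y) = bspline d y"
proof -
  have "fact d * bspline d (real (Suc d) - y)
      = (\<Sum>i\<le>Suc d. (-1)^(Suc d - i) * real (Suc d choose (Suc d - i)) *
                       tpow d (real (Suc d) - y - real (Suc d - i)))"
    unfolding bspline_eq_sum atLeast0AtMost[symmetric]
    by (subst sum.atLeastAtMost_rev) simp
  also have "\<dots> = (\<Sum>i\<le>Suc d. (-1)^i * real (Suc d choose i) * tpow d (y - real i))
                 - (\<Sum>i\<le>Suc d. (-1)^i * real (Suc d choose i) * (y - real i)^d)"
    unfolding sum_subtractf[symmetric]
  proof (rule sum.cong[OF refl])
    fix i assume i: "i \<in> {..Suc d}"
    have arg: "real (Suc d) - y - real (Suc d - i) = - (y - real i)"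
      using i by simp
    have sign: "(-1::real)^(Suc d - i) = - ((-1)^d * (-1)^i)"
      using i by (simp add: minus_one_power_diff)
    show "(-1)^(Suc d - i) * real (Suc d choose (Suc d - i)) *
                 tpow d (real (Suc d) - y - real (Suc d - i))
        = (-1)^i * real (Suc d choose i) * tpow d (y - real i)
          - (-1)^i * real (Suc d choose i) * (y - real i)^d"
      unfolding arg sign tpow_reflect[OF assms] binomial_symmetric[OF i[simplified], symmetric]
      by (simp add: algebra_simps)
  qed
  also have "\<dots> = fact d * bspline d y"
    using finite_difference_power[of d "Suc d" y] by (simp add: bspline_eq_sum)
  finally show ?thesis by simp
qed

lemma alternating_sum_fold_symmetric:
  fixes \<phi> :: "nat \<Rightarrow> 'a::comm_ring_1"
  assumes "\<And>k. k \<le> r \<Longrightarrow> \<phi> (r - k) = \<phi> (r + k)"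
  shows "(\<Sum>j\<le>2*r. (-1)^j * \<phi> j) = (-1)^r * (\<phi> r + 2 * (\<Sum>k=1..r. (-1)^k * \<phi> (r + k)))"
  using assms
proof (induction r arbitrary: \<phi>)
  case 0
  then show ?case by simp
next
  case (Suc r)
  define \<psi> where "\<psi> j = \<phi> (Suc j)" for j
  have "\<psi> (r - k) = \<psi> (r + k)" if "k \<le> r" for k
    using Suc.prems[of k] that by (simp add: \<psi>_def Suc_diff_le)
  then have IH: "(\<Sum>j\<le>2*r. (-1)^j * \<psi> j)
      = (-1)^r * (\<psi> r + 2 * (\<Sum>k=1..r. (-1)^k * \<psi> (r + k)))"
    by (rule Suc.IH)
  have ends: "\<phi> 0 = \<phi> (2 * Suc r)" using Suc.prems[of "Suc r"] by (simp add: mult_2)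
  have "2 * Suc r = Suc (Suc (2*r))" by simp
  then have "(\<Sum>j\<le>2*Suc r. (-1)^j * \<phi> j) = \<phi> 0 + (\<Sum>j\<le>Suc (2*r). (-1)^Suc j * \<phi> (Suc j))"
    by (simp only: sum.atMost_Suc_shift) simp
  also have "\<dots> = \<phi> 0 + \<phi> (2 * Suc r) - (\<Sum>j\<le>2*r. (-1)^j * \<psi> j)"
    by (simp add: \<psi>_def sum_negf)
  finally have split: "(\<Sum>j\<le>2*Suc r. (-1)^j * \<phi> j)
      = \<phi> 0 + \<phi> (2 * Suc r) - (\<Sum>j\<le>2*r. (-1)^j * \<psi> j)" .
  have last: "(\<Sum>k=1..Suc r. (-1)^k * \<phi> (Suc r + k))
      = (\<Sum>k=1..r. (-1)^k * \<psi> (r + k)) + (-1)^Suc r * \<phi> (2 * Suc r)"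
    by (simp add: \<psi>_def mult_2)
  show ?case
    unfolding split IH last ends by (simp add: \<psi>_def algebra_simps)
qed

(* By symmetry of the B-spline, lambda^d is (up to sign) the full alternating sum of
   the B-spline values at the 2r+1 points of the form k + ((d+1)/2 - r). *)
lemma lambda_inf_alternating_sum:
  "fact d * lambda_inf d = (-1)^(d div 2) *
     (\<Sum>k\<le>2 * (d div 2). (-1)^k * (fact d * bspline d (real k + ((real d + 1)/2 - real (d div 2)))))"
proof -
  define r where "r = d div 2"
  define c where "c = (real d + 1)/2 - real r"
  define \<phi> where "\<phi> k = fact d * bspline d (real k + c)" for k
  have tval_eq: "fact d * tval d j = \<phi> (r + j)" for j
    by (simp add: tval_def \<phi>_def c_def algebra_simps)
  have symmetric: "\<phi> (r - k) = \<phi> (r + k)" if k: "k \<le> r" for k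
  proof (cases "r = 0")
    case True
    with k show ?thesis by simp
  next
    case False
    then have "1 \<le> d" by (simp add: r_def)
    have "real (r - k) + c = real (Suc d) - (real (r + k) + c)"
      using k by (simp add: c_def field_simps)
    then show ?thesis
      by (simp only: \<phi>_def bspline_symmetric[OF \<open>1 \<le> d\<close>])
  qed
  have "fact d * lambda_inf d = fact d * tval d 0 + 2 * (\<Sum>k=1..r. (-1)^k * (fact d * tval d k))"
    by (simp add: lambda_inf_def r_def algebra_simps sum_distrib_left)
  also have "\<dots> = \<phi> r + 2 * (\<Sum>k=1..r. (-1)^k * \<phi> (r + k))"
    by (simp only: tval_eq) simp
  also have "\<dots> = (-1)^r * (\<Sum>k\<le>2*r. (-1)^k * \<phi> k)"
    using alternating_sum_fold_symmetric[of r \<phi>, OF symmetric] by simp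
  finally show ?thesis by (simp add: r_def c_def \<phi>_def)
qed

(* lambda^d in terms of P_d: the sample points are k + 1/2 for even d and k + 1 for
   odd d, so the alternating sum is P_d(1/2) or (using N^d(0) = 0) minus P_d(0). *)
lemma lambda_inf_eq_scaled_euler_poly:
  "fact d * lambda_inf d = (-1)^(d div 2) *
     (if even d then poly (scaled_euler_poly d) (1/2) else - poly (scaled_euler_poly d) 0)"
proof (cases "even d")
  case True
  then obtain r where d: "d = 2 * r" by (rule evenE)
  have "poly (scaled_euler_poly d) (1/2) = (\<Sum>k\<le>2*r. (-1)^k * (fact d * bspline d (real k + 1/2)))"
    using scaled_euler_poly_eq_bspline_sum[of "1/2" d] by (simp add: d add.commute)
  moreover have offset: "(real d + 1)/2 - real (d div 2) = 1/2" by (simp add: d field_simps)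
  ultimately show ?thesis
    using lambda_inf_alternating_sum[of d, unfolded offset] True by (simp add: d)
next
  case False
  then obtain r where d: "d = 2 * r + 1" by (rule oddE)
  have "poly (scaled_euler_poly d) 0 = (\<Sum>j\<le>Suc (2*r). (-1)^j * (fact d * bspline d (real j)))"
    using scaled_euler_poly_eq_bspline_sum[of 0 d] by (simp add: d)
  also have "\<dots> = - (\<Sum>k\<le>2*r. (-1)^k * (fact d * bspline d (real k + 1)))"
    unfolding sum.atMost_Suc_shift
    by (simp del: sum.atMost_Suc add: bspline_at_zero d sum_negf add.commute)
  moreover have offset: "(real d + 1)/2 - real (d div 2) = 1" by (simp add: d field_simps)
  ultimately show ?thesis
    using lambda_inf_alternating_sum[of d, unfolded offset] False by (simp add: d)
qed

definition parity_part :: "bool \<Rightarrow> (nat \<Rightarrow> real) \<Rightarrow> real fps" where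
  "parity_part b a = Abs_fps (\<lambda>m. if even m = b then a m else 0)"

(* Coefficients of cos t times a parity part whose coefficients are given by
   (-1)^(m div 2) g m / m!: only the terms with j even contribute, with matching signs. *)
lemma cos_times_parity_part:
  fixes a g :: "nat \<Rightarrow> real"
  assumes a_eq: "\<And>m. even m = b \<Longrightarrow> fact m * a m = (-1)^(m div 2) * g m"
  shows "fps_nth (fps_cos 1 * parity_part b a) n =
    (if even n = b
     then (-1)^(n div 2) / (2 * fact n) * (\<Sum>j\<le>n. real (n choose j) * (1 + (-1)^j) * g (n - j))
     else 0)"
proof -
  have product: "fps_nth (fps_cos 1 * parity_part b a) n =
      (\<Sum>j\<le>n. fps_nth (fps_cos 1) j * (if even (n - j) = b then a (n - j) else 0))"
    by (simp add: fps_mult_nth parity_part_def atLeast0AtMost)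
  show ?thesis
  proof (cases "even n = b")
    case True
    have "fps_nth (fps_cos 1) j * (if even (n - j) = b then a (n - j) else 0)
        = (-1)^(n div 2) / (2 * fact n) * (real (n choose j) * (1 + (-1)^j) * g (n - j))"
      if j: "j \<le> n" for j
    proof (cases "even j")
      case True
      with j \<open>even n = b\<close> have parity: "even (n - j) = b" by auto
      have signs: "j div 2 + (n - j) div 2 = n div 2" using True j by (auto elim!: evenE)
      have "fps_nth (fps_cos 1) j * (if even (n - j) = b then a (n - j) else 0)
          = (-1)^(j div 2) * (-1)^((n - j) div 2) * g (n - j) / (fact j * fact (n - j))"
        using True parity a_eq[OF parity] by (simp add: fps_cos_def field_simps)
      also have "\<dots> = (-1)^(n div 2) / (2 * fact n) * (real (n choose j) * (1 + (-1)^j) * g (n - j))"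
        using True by (simp add: binomial_fact[OF j] signs flip: power_add)
      finally show ?thesis .
    qed (simp add: fps_cos_def)
    then show ?thesis
      using True by (simp add: product sum_distrib_left)
  next
    case False
    then show ?thesis
      unfolding product by (auto intro!: sum.neutral simp: fps_cos_def split: if_splits)
  qed
qed

(* The binomial identity at x = 1/2: cos t times the even part is 1. *)
lemma fps_cos_times_even_lambda_inf: "fps_cos 1 * parity_part True lambda_inf = 1"
proof (rule fps_ext)
  fix n
  have "fps_nth (fps_cos 1 * parity_part True lambda_inf) n =
      (if even n then (-1)^(n div 2) / (2 * fact n) * (2^Suc n * (1/2 - 1/2)^n) else 0)"
    using cos_times_parity_part[of True lambda_inf "\<lambda>m. poly (scaled_euler_poly m) (1/2)" n]
    by (simp add: lambda_inf_eq_scaled_euler_poly scaled_euler_poly_parity_sum)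
  then show "fps_nth (fps_cos 1 * parity_part True lambda_inf) n = fps_nth 1 n"
    by (cases "n = 0") auto
qed

(* The binomial identity at x = 0: cos t times the odd part is sin t. *)
lemma fps_cos_times_odd_lambda_inf: "fps_cos 1 * parity_part False lambda_inf = fps_sin 1"
proof (rule fps_ext)
  fix n
  have "fps_nth (fps_cos 1 * parity_part False lambda_inf) n =
      (if odd n then (-1)^(n div 2) / (2 * fact n) * - (2^Suc n * (0 - 1/2)^n) else 0)"
    using cos_times_parity_part[of False lambda_inf "\<lambda>m. - poly (scaled_euler_poly m) 0" n]
    by (simp add: lambda_inf_eq_scaled_euler_poly scaled_euler_poly_parity_sum sum_negf)
  moreover have "odd n \<Longrightarrow> (n - 1) div 2 = n div 2" by (auto elim: oddE)
  moreover have "odd n \<Longrightarrow> - (2^Suc n * (0 - 1/2)^n) = (2::real)"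
    by (simp add: power_one_over)
  ultimately show "fps_nth (fps_cos 1 * parity_part False lambda_inf) n = fps_nth (fps_sin 1) n"
    by (simp add: fps_sin_def)
qed

lemma inverse_fps_cos_eq_lambda_inf: "inverse (fps_cos (1::real)) = parity_part True lambda_inf"
  by (rule fps_inverse_unique[OF fps_cos_times_even_lambda_inf])

lemma fps_tan_eq_lambda_inf: "fps_tan (1::real) = parity_part False lambda_inf"
proof -
  have "fps_tan (1::real) = fps_sin 1 * inverse (fps_cos 1)"
    unfolding fps_tan_def by (rule fps_divide_unit) simp
  also have "\<dots> = parity_part False lambda_inf * (fps_cos 1 * parity_part True lambda_inf)"
    by (simp add: inverse_fps_cos_eq_lambda_inf flip: fps_cos_times_odd_lambda_inf)
  finally show ?thesis by (simp add: fps_cos_times_even_lambda_inf)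
qed

theorem mainTheorem1:
  fixes d :: nat
  shows "lambda_inf d = (1 / fact d) *
           (if odd d then tangent_number d else euler_number d)"
  by (simp add: tangent_number_def euler_number_def fps_tan_eq_lambda_inf
      inverse_fps_cos_eq_lambda_inf parity_part_def)

end
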